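(* The center of the formal Burau group $\mathcal{B}$ is generated by $\beta(\Delta)$, where $\Delta=(\sigma_1\sigma_2\sigma_1)^2$. In particular, $Z(\mathcal{B})=Z(\beta(B_3))$.
   Context: Let $B_3$ be the braid group with standard generators $\sigma_1,\sigma_2$ and $\beta$ the Burau representation $\beta(\sigma_1)=\begin{pmatrix}1-t&t&0\\1&0&0\\0&0&1\end{pmatrix}$, $\beta(\sigma_2)=\begin{pmatrix}1&0&0\\0&1-t&t\\0&1&0\end{pmatrix}$. For a matrix $A$ with Laurent polynomial entries, $\overline{A}$ denotes substitution $t\mapsto t^{-1}$ in every entry. Let $J_3=\begin{pmatrix}1&-t^{-1}&-t^{-1}\\-t&1&-t^{-1}\\-t&-t&1\end{pmatrix}$, $v=(t,t^2,t^3)$ (a row vector), $\vec{1}=(1,1,1)^T$, and the formal Burau group $\mathcal{B}=\{A\in\mathrm{GL}(3,\mathbb{Z}[t,t^{-1}]) : vA=v,\ A\vec 1=\vec 1,\ \overline{A}J_3A^T=J_3\}$. *)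

theory Defs
  imports "HOL-Analysis.Analysis" "HOL-Library.Poly_Mapping"
begin

text \<open>Laurent polynomials Z[t,t^-1] realised as the group ring of (int,+) with integer
  coefficients: finitely supported functions int to int with convolution product.
  The monomial t^k is the finitely supported function single k 1.\<close>

type_synonym laurent = "int \<Rightarrow>\<^sub>0 int"

definition lt :: laurent where "lt = Poly_Mapping.single 1 1"
definition lt_inv :: laurent where "lt_inv = Poly_Mapping.single (-1) 1"

lift_definition lbar :: "laurent \<Rightarrow> laurent" is "\<lambda>p k. p (- k)"
proof -
  fix p :: "int \<Rightarrow> int"
  assume "finite {x. p x \<noteq> 0}"
  hence "finite (uminus ` {x. p x \<noteq> 0})" by simp
  moreover have "{k. p (- k) \<noteq> 0} = uminus ` {x. p x \<noteq> 0}"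
    by (auto intro: image_eqI[where x = "- _"])
  ultimately show "finite {k. p (- k) \<noteq> 0}" by simp
qed

type_synonym lmat = "laurent ^ 3 ^ 3"

definition mat_bar :: "lmat \<Rightarrow> lmat" where
  "mat_bar A = (\<chi> i j. lbar (A $ i $ j))"

definition mat3 :: "laurent \<Rightarrow> laurent \<Rightarrow> laurent \<Rightarrow> laurent \<Rightarrow> laurent \<Rightarrow> laurent
   \<Rightarrow> laurent \<Rightarrow> laurent \<Rightarrow> laurent \<Rightarrow> lmat" where
  "mat3 a b c d e f g h k = vector [vector [a, b, c], vector [d, e, f], vector [g, h, k]]"

definition burau_s1 :: lmat where
  "burau_s1 = mat3 (1 - lt) lt 0  1 0 0  0 0 1"

definition burau_s2 :: lmat where
  "burau_s2 = mat3 1 0 0  0 (1 - lt) lt  0 1 0"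

definition burau_Delta :: lmat where
  "burau_Delta = (burau_s1 ** burau_s2 ** burau_s1) ** (burau_s1 ** burau_s2 ** burau_s1)"

definition J3 :: lmat where
  "J3 = mat3 1 (- lt_inv) (- lt_inv)  (- lt) 1 (- lt_inv)  (- lt) (- lt) 1"

definition vrow :: "laurent ^ 3" where "vrow = vector [lt, lt ^ 2, lt ^ 3]"
definition ones3 :: "laurent ^ 3" where "ones3 = vector [1, 1, 1]"

definition formal_burau :: "lmat set" where
  "formal_burau = {A. invertible A \<and> vrow v* A = vrow \<and> A *v ones3 = ones3
                      \<and> mat_bar A ** J3 ** transpose A = J3}"

inductive_set gen_subgroup :: "lmat set \<Rightarrow> lmat set" for S where
  gen_one: "mat 1 \<in> gen_subgroup S"
| gen_elem: "s \<in> S \<Longrightarrow> s \<in> gen_subgroup S"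
| gen_mult: "a \<in> gen_subgroup S \<Longrightarrow> b \<in> gen_subgroup S \<Longrightarrow> a ** b \<in> gen_subgroup S"
| gen_inv: "a \<in> gen_subgroup S \<Longrightarrow> a ** b = mat 1 \<Longrightarrow> b ** a = mat 1 \<Longrightarrow> b \<in> gen_subgroup S"

definition mat_center :: "lmat set \<Rightarrow> lmat set" where
  "mat_center G = {A \<in> G. \<forall>X \<in> G. A ** X = X ** A}"

end

theory Submission
  imports Defs
begin

text \<open>Every element of the formal Burau group fixes the column \<open>1\<close> and, since \<open>v = t u\<close>,
  the row \<open>u = (1, t, t\<^sup>2)\<close>. Hence the matrices \<open>l I + x 1 u\<close> commute with the whole group, and
  they are exactly the matrices commuting with \<open>\<beta>(\<sigma>\<^sub>1)\<close> and \<open>\<beta>(\<sigma>\<^sub>2)\<close>; so the centre of any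
  group between \<open>\<beta>(B\<^sub>3)\<close> and the formal Burau group consists of its members of this shape.
  For such a member \<open>A 1 = (l + x \<Phi>) 1\<close> with \<open>\<Phi> = 1 + t + t\<^sup>2\<close>, so \<open>l + x \<Phi> = 1\<close>, and
  invertibility makes \<open>l\<close> a unit \<open>\<plusminus>t\<^sup>k\<close> of \<open>\<int>[t, t\<^sup>-\<^sup>1]\<close>. A degree argument shows that
  \<open>\<Phi>\<close> divides \<open>1 \<mp> t\<^sup>k\<close> only if the sign is \<open>+\<close> and \<open>3\<close> divides \<open>k\<close>; then \<open>x\<close> is
  determined by \<open>l\<close>, and \<open>\<beta>(\<Delta>) = t\<^sup>3 I + (1 - t) 1 u\<close> has a power with every such \<open>l\<close>.\<close>

section \<open>Laurent polynomials\<close>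

lemma lt_mult_lt_inv [simp]: "lt * lt_inv = 1" "lt_inv * lt = 1"
  by (simp_all add: lt_def lt_inv_def mult_single)

lemma lt_nonzero [simp]: "lt \<noteq> 0"
  using lt_mult_lt_inv(1) by force

lemma single_one_power:
  "(Poly_Mapping.single k 1 :: int \<Rightarrow>\<^sub>0 'a::comm_semiring_1) ^ n = Poly_Mapping.single (int n * k) 1"
  by (induction n) (auto simp: mult_single algebra_simps)

lemma lt_power: "lt ^ n = Poly_Mapping.single (int n) 1"
  by (simp add: lt_def single_one_power)

lemma lbar_simps [simp]:
  "lbar 0 = 0" "lbar 1 = 1" "lbar lt = lt_inv" "lbar lt_inv = lt"
  "lbar (a + b) = lbar a + lbar b" "lbar (a - b) = lbar a - lbar b" "lbar (- a) = - lbar a"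
  by (transfer, auto simp: when_def lt_def lt_inv_def)+

lemma lookup_mult_int:
  fixes f g :: "int \<Rightarrow>\<^sub>0 'a::comm_semiring_0"
  shows "Poly_Mapping.lookup (f * g) k
    = Sum_any (\<lambda>l. Poly_Mapping.lookup f l * Poly_Mapping.lookup g (k - l))"
proof -
  have "Sum_any (\<lambda>q. Poly_Mapping.lookup g q when k = l + q)
      = Sum_any (\<lambda>q. Poly_Mapping.lookup g q when q = k - l)" for l
    by (rule Sum_any.cong) (auto simp: when_def)
  then show ?thesis
    by (simp add: lookup_mult)
qed

lemma lbar_mult [simp]: "lbar (a * b) = lbar a * lbar b"
proof (rule poly_mapping_eqI)
  fix k
  have "Poly_Mapping.lookup (lbar (a * b)) k
      = Sum_any (\<lambda>l. Poly_Mapping.lookup a l * Poly_Mapping.lookup b (- k - l))"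
    by (simp add: lbar.rep_eq lookup_mult_int)
  also have "\<dots> = Sum_any (\<lambda>l. Poly_Mapping.lookup a (- l) * Poly_Mapping.lookup b (l - k))"
    by (rule Sum_any.reindex_cong[where l = uminus]) (auto simp: bij_def fun_eq_iff)
  also have "\<dots> = Poly_Mapping.lookup (lbar a * lbar b) k"
    by (simp add: lbar.rep_eq lookup_mult_int)
  finally show "Poly_Mapping.lookup (lbar (a * b)) k = Poly_Mapping.lookup (lbar a * lbar b) k" .
qed

definition hi_deg :: "(int \<Rightarrow>\<^sub>0 'a::zero) \<Rightarrow> int" where
  "hi_deg p = Max (Poly_Mapping.keys p)"

definition lo_deg :: "(int \<Rightarrow>\<^sub>0 'a::zero) \<Rightarrow> int" where
  "lo_deg p = Min (Poly_Mapping.keys p)"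

lemma hi_deg_in_keys: "p \<noteq> 0 \<Longrightarrow> hi_deg p \<in> Poly_Mapping.keys p"
  unfolding hi_deg_def by (rule Max_in) auto

lemma lo_deg_in_keys: "p \<noteq> 0 \<Longrightarrow> lo_deg p \<in> Poly_Mapping.keys p"
  unfolding lo_deg_def by (rule Min_in) auto

lemma le_hi_deg: "k \<in> Poly_Mapping.keys p \<Longrightarrow> k \<le> hi_deg p"
  unfolding hi_deg_def by (rule Max_ge) auto

lemma lo_deg_le: "k \<in> Poly_Mapping.keys p \<Longrightarrow> lo_deg p \<le> k"
  unfolding lo_deg_def by (rule Min_le) auto

lemma lo_deg_le_hi_deg: "p \<noteq> 0 \<Longrightarrow> lo_deg p \<le> hi_deg p"
  using le_hi_deg[OF lo_deg_in_keys] by blast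

lemma hi_deg_eqI:
  "k \<in> Poly_Mapping.keys p \<Longrightarrow> (\<And>j. j \<in> Poly_Mapping.keys p \<Longrightarrow> j \<le> k) \<Longrightarrow> hi_deg p = k"
  unfolding hi_deg_def by (rule Max_eqI) auto

lemma lo_deg_eqI:
  "k \<in> Poly_Mapping.keys p \<Longrightarrow> (\<And>j. j \<in> Poly_Mapping.keys p \<Longrightarrow> k \<le> j) \<Longrightarrow> lo_deg p = k"
  unfolding lo_deg_def by (rule Min_eqI) auto

lemma lookup_mult_unique_split:
  fixes f g :: "int \<Rightarrow>\<^sub>0 'a::comm_semiring_0"
  assumes "\<And>l. l \<noteq> a \<Longrightarrow> Poly_Mapping.lookup f l * Poly_Mapping.lookup g (a + b - l) = 0"
  shows "Poly_Mapping.lookup (f * g) (a + b) = Poly_Mapping.lookup f a * Poly_Mapping.lookup g b"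
proof -
  have "Poly_Mapping.lookup (f * g) (a + b)
      = Sum_any (\<lambda>l. Poly_Mapping.lookup f l * Poly_Mapping.lookup g (a + b - l) when l = a)"
    unfolding lookup_mult_int by (rule Sum_any.cong) (use assms in \<open>auto simp: when_def\<close>)
  then show ?thesis by simp
qed

lemma lookup_mult_hi_deg:
  fixes f g :: "int \<Rightarrow>\<^sub>0 'a::comm_semiring_0"
  shows "Poly_Mapping.lookup (f * g) (hi_deg f + hi_deg g)
    = Poly_Mapping.lookup f (hi_deg f) * Poly_Mapping.lookup g (hi_deg g)"
proof (rule lookup_mult_unique_split)
  fix l assume "l \<noteq> hi_deg f"
  then have "l \<notin> Poly_Mapping.keys f \<or> hi_deg f + hi_deg g - l \<notin> Poly_Mapping.keys g"
    using le_hi_deg[of l f] le_hi_deg[of "hi_deg f + hi_deg g - l" g] by force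
  then show "Poly_Mapping.lookup f l * Poly_Mapping.lookup g (hi_deg f + hi_deg g - l) = 0"
    by (auto simp: in_keys_iff)
qed

lemma lookup_mult_lo_deg:
  fixes f g :: "int \<Rightarrow>\<^sub>0 'a::comm_semiring_0"
  shows "Poly_Mapping.lookup (f * g) (lo_deg f + lo_deg g)
    = Poly_Mapping.lookup f (lo_deg f) * Poly_Mapping.lookup g (lo_deg g)"
proof (rule lookup_mult_unique_split)
  fix l assume "l \<noteq> lo_deg f"
  then have "l \<notin> Poly_Mapping.keys f \<or> lo_deg f + lo_deg g - l \<notin> Poly_Mapping.keys g"
    using lo_deg_le[of l f] lo_deg_le[of "lo_deg f + lo_deg g - l" g] by force
  then show "Poly_Mapping.lookup f l * Poly_Mapping.lookup g (lo_deg f + lo_deg g - l) = 0"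
    by (auto simp: in_keys_iff)
qed

lemma hi_deg_mult:
  fixes f g :: "int \<Rightarrow>\<^sub>0 'a::idom"
  assumes "f \<noteq> 0" "g \<noteq> 0"
  shows "hi_deg (f * g) = hi_deg f + hi_deg g"
proof (rule hi_deg_eqI)
  show "hi_deg f + hi_deg g \<in> Poly_Mapping.keys (f * g)"
    using lookup_mult_hi_deg[of f g] hi_deg_in_keys[OF assms(1)] hi_deg_in_keys[OF assms(2)]
    by (simp add: in_keys_iff)
next
  fix j assume "j \<in> Poly_Mapping.keys (f * g)"
  then obtain a b where "j = a + b" "a \<in> Poly_Mapping.keys f" "b \<in> Poly_Mapping.keys g"
    using keys_mult by blast
  then show "j \<le> hi_deg f + hi_deg g"
    using le_hi_deg[of a f] le_hi_deg[of b g] by simp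
qed

lemma lo_deg_mult:
  fixes f g :: "int \<Rightarrow>\<^sub>0 'a::idom"
  assumes "f \<noteq> 0" "g \<noteq> 0"
  shows "lo_deg (f * g) = lo_deg f + lo_deg g"
proof (rule lo_deg_eqI)
  show "lo_deg f + lo_deg g \<in> Poly_Mapping.keys (f * g)"
    using lookup_mult_lo_deg[of f g] lo_deg_in_keys[OF assms(1)] lo_deg_in_keys[OF assms(2)]
    by (simp add: in_keys_iff)
next
  fix j assume "j \<in> Poly_Mapping.keys (f * g)"
  then obtain a b where "j = a + b" "a \<in> Poly_Mapping.keys f" "b \<in> Poly_Mapping.keys g"
    using keys_mult by blast
  then show "lo_deg f + lo_deg g \<le> j"
    using lo_deg_le[of a f] lo_deg_le[of b g] by simp
qed

lemma single_if_lo_deg_eq_hi_deg: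
  assumes "p \<noteq> 0" "lo_deg p = hi_deg p"
  shows "p = Poly_Mapping.single (hi_deg p) (Poly_Mapping.lookup p (hi_deg p))"
proof (rule poly_mapping_eqI)
  fix j
  have "j \<in> Poly_Mapping.keys p \<Longrightarrow> j = hi_deg p"
    using le_hi_deg[of j p] lo_deg_le[of j p] assms(2) by simp
  then show "Poly_Mapping.lookup p j
      = Poly_Mapping.lookup (Poly_Mapping.single (hi_deg p) (Poly_Mapping.lookup p (hi_deg p))) j"
    by (cases "j = hi_deg p") (auto simp: in_keys_iff lookup_single when_def)
qed

lemma laurent_unit_eq_single:
  fixes f g :: laurent
  assumes "f * g = 1"
  shows "\<exists>k c. f = Poly_Mapping.single k c \<and> (c = 1 \<or> c = -1)"
proof -
  have f0: "f \<noteq> 0" and g0: "g \<noteq> 0"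
    using assms by auto
  have "hi_deg (f * g) = 0" "lo_deg (f * g) = 0"
    unfolding hi_deg_def lo_deg_def assms by simp_all
  then have hi: "hi_deg f + hi_deg g = 0" and "lo_deg f + lo_deg g = 0"
    using hi_deg_mult[OF f0 g0] lo_deg_mult[OF f0 g0] by auto
  then have "lo_deg f = hi_deg f"
    using lo_deg_le_hi_deg[OF f0] lo_deg_le_hi_deg[OF g0] by auto
  moreover have "Poly_Mapping.lookup f (hi_deg f) * Poly_Mapping.lookup g (hi_deg g) = 1"
    using lookup_mult_hi_deg[of f g] hi assms by simp
  ultimately show ?thesis
    using single_if_lo_deg_eq_hi_deg[OF f0] zmult_eq_1_iff by metis
qed

section \<open>Divisibility by \<open>1 + t + t\<^sup>2\<close>\<close>

definition cyclo3 :: laurent where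
  "cyclo3 = 1 + lt + lt ^ 2"

lemma lookup_cyclo3: "Poly_Mapping.lookup cyclo3 j = (if j \<in> {0, 1, 2} then 1 else 0)"
  using lt_power[of 2]
  by (auto simp: cyclo3_def lt_def lookup_add lookup_single lookup_one when_def)

lemma cyclo3_nonzero [simp]: "cyclo3 \<noteq> 0"
  using lookup_cyclo3[of 0] by auto

lemma hi_deg_cyclo3: "hi_deg cyclo3 = 2"
  by (rule hi_deg_eqI) (auto simp: in_keys_iff lookup_cyclo3 split: if_splits)

lemma lo_deg_cyclo3: "lo_deg cyclo3 = 0"
  by (rule lo_deg_eqI) (auto simp: in_keys_iff lookup_cyclo3 split: if_splits)

lemma cyclo3_mult_one_minus_lt: "cyclo3 * (1 - lt) = 1 - lt ^ 3"
  by (simp add: cyclo3_def algebra_simps power2_eq_square power3_eq_cube)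

lemma cyclo3_dvd_one_minus_power3: "\<exists>y. cyclo3 * y = 1 - Poly_Mapping.single (3 * m) 1"
proof -
  have nat_case: "\<exists>y. cyclo3 * y = 1 - Poly_Mapping.single (3 * int n) 1" for n
  proof
    have "1 - Poly_Mapping.single (3 * int n) 1 = 1 - (lt ^ 3) ^ n"
      using lt_power[of "3 * n"] by (simp add: power_mult)
    also have "\<dots> = (1 - lt ^ 3) * (\<Sum>i<n. (lt ^ 3) ^ i)"
      by (rule one_diff_power_eq)
    also have "\<dots> = cyclo3 * ((1 - lt) * (\<Sum>i<n. (lt ^ 3) ^ i))"
      by (simp only: cyclo3_mult_one_minus_lt[symmetric] mult.assoc)
    finally show "cyclo3 * ((1 - lt) * (\<Sum>i<n. (lt ^ 3) ^ i)) = 1 - Poly_Mapping.single (3 * int n) 1"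
      by simp
  qed
  show ?thesis
  proof (cases "m \<ge> 0")
    case True
    then show ?thesis
      using nat_case[of "nat m"] by simp
  next
    case False
    define n where "n = nat (- m)"
    then have m: "m = - int n"
      using False by simp
    obtain y where y: "cyclo3 * y = 1 - Poly_Mapping.single (3 * int n) 1"
      using nat_case by blast
    let ?u = "Poly_Mapping.single (3 * m) (1::int)"
    have "cyclo3 * (- ?u * y) = - ?u * (cyclo3 * y)"
      by (rule mult.left_commute)
    also have "\<dots> = ?u * Poly_Mapping.single (3 * int n) 1 - ?u"
      unfolding y by (simp add: right_diff_distrib)
    also have "\<dots> = 1 - ?u"
      by (simp add: mult_single m)
    finally show ?thesis ..
  qed
qed

lemma cyclo3_dvd_one_minus_small_monomial:
  fixes z :: laurent
  assumes z: "cyclo3 * z = 1 - Poly_Mapping.single r c"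
    and r: "0 \<le> r" "r < 3" and c: "c = 1 \<or> c = -1"
  shows "r = 0 \<and> c = 1"
proof (rule ccontr)
  assume nontrivial: "\<not> (r = 0 \<and> c = 1)"
  define w where "w = 1 - Poly_Mapping.single r c"
  have lookup_w: "Poly_Mapping.lookup w j = (if j = 0 then 1 else 0) - (if j = r then c else 0)" for j
    by (auto simp: w_def lookup_minus lookup_one lookup_single when_def)
  have "w \<noteq> 0"
    using lookup_w[of 0] nontrivial c by (auto split: if_splits)
  then have z0: "z \<noteq> 0"
    using z w_def by auto
  have "hi_deg w \<le> r" "0 \<le> lo_deg w"
    using hi_deg_in_keys[OF \<open>w \<noteq> 0\<close>] lo_deg_in_keys[OF \<open>w \<noteq> 0\<close>] lookup_w r
    by (auto simp: in_keys_iff split: if_splits)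
  moreover have "hi_deg w = 2 + hi_deg z" "lo_deg w = lo_deg z"
    using hi_deg_mult[OF cyclo3_nonzero z0] lo_deg_mult[OF cyclo3_nonzero z0] z
    by (simp_all add: w_def hi_deg_cyclo3 lo_deg_cyclo3)
  \<comment> \<open>multiplication by \<open>1 + t + t\<^sup>2\<close> widens the exponent range by 2\<close>
  ultimately have "r = 2" "hi_deg z = 0" "lo_deg z = 0"
    using lo_deg_le_hi_deg[OF z0] r by auto
  then have z_single: "z = Poly_Mapping.single 0 (Poly_Mapping.lookup z 0)"
    using single_if_lo_deg_eq_hi_deg[OF z0] by simp
  then have "Poly_Mapping.lookup z 0 \<noteq> 0"
    using z0 by (metis single_zero)
  moreover have "Poly_Mapping.lookup (cyclo3 * z) (1 + 0)
      = Poly_Mapping.lookup cyclo3 1 * Poly_Mapping.lookup z 0"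
    by (rule lookup_mult_unique_split, subst z_single) (simp add: lookup_single when_def)
  ultimately show False
    using z lookup_w[of 1] \<open>r = 2\<close> by (simp add: w_def lookup_cyclo3)
qed

lemma cyclo3_dvd_one_minus_monomial:
  fixes x :: laurent
  assumes x: "cyclo3 * x = 1 - Poly_Mapping.single k c" and c: "c = 1 \<or> c = -1"
  shows "c = 1 \<and> 3 dvd k"
proof -
  obtain y where y: "cyclo3 * y = 1 - Poly_Mapping.single (3 * (k div 3)) 1"
    using cyclo3_dvd_one_minus_power3 by blast
  \<comment> \<open>dividing by \<open>t\<^sup>3\<^sup>m\<close> reduces the exponent to \<open>k mod 3\<close>\<close>
  let ?u = "Poly_Mapping.single (- 3 * (k div 3)) (1::int)"
  have "cyclo3 * (?u * (x - y)) = ?u * (cyclo3 * x - cyclo3 * y)"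
    by (simp add: algebra_simps)
  also have "\<dots> = ?u * Poly_Mapping.single (3 * (k div 3)) 1 - ?u * Poly_Mapping.single k c"
    unfolding x y by (simp add: algebra_simps)
  also have "\<dots> = 1 - Poly_Mapping.single (k mod 3) c"
    by (simp add: mult_single minus_div_mult_eq_mod[symmetric] algebra_simps)
  finally have "k mod 3 = 0 \<and> c = 1"
    using cyclo3_dvd_one_minus_small_monomial c by simp
  then show ?thesis
    by auto
qed

section \<open>The formal Burau group\<close>

lemma vec3_eq_iff: "(x::'a^3) = y \<longleftrightarrow> x$1 = y$1 \<and> x$2 = y$2 \<and> x$3 = y$3"
  by (simp add: vec_eq_iff forall_3)

lemma mat3x3_eq_iff: "(A::'a^3^3) = B \<longleftrightarrow>
    A$1$1 = B$1$1 \<and> A$1$2 = B$1$2 \<and> A$1$3 = B$1$3 \<and>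
    A$2$1 = B$2$1 \<and> A$2$2 = B$2$2 \<and> A$2$3 = B$2$3 \<and>
    A$3$1 = B$3$1 \<and> A$3$2 = B$3$2 \<and> A$3$3 = B$3$3"
  by (simp add: vec_eq_iff forall_3)

lemma matrix_matrix_mult_3_nth:
  "((A::'a::semiring_1^3^'m) ** B) $ i $ j = A$i$1 * B$1$j + A$i$2 * B$2$j + A$i$3 * B$3$j"
  by (simp add: matrix_matrix_mult_def sum_3)

lemma matrix_vector_mult_3_nth:
  "((A::'a::semiring_1^3^'m) *v v) $ i = A$i$1 * v$1 + A$i$2 * v$2 + A$i$3 * v$3"
  by (simp add: matrix_vector_mult_def sum_3)

lemma vector_matrix_mult_3_nth:
  "((v::'a::semiring_1^3) v* (A::'a^'n^3)) $ j = v$1 * A$1$j + v$2 * A$2$j + v$3 * A$3$j"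
  by (simp add: vector_matrix_mult_def sum_3)

lemma mat3_nth [simp]:
  "mat3 a b c d e f g h k $ 1 $ 1 = a" "mat3 a b c d e f g h k $ 1 $ 2 = b"
  "mat3 a b c d e f g h k $ 1 $ 3 = c" "mat3 a b c d e f g h k $ 2 $ 1 = d"
  "mat3 a b c d e f g h k $ 2 $ 2 = e" "mat3 a b c d e f g h k $ 2 $ 3 = f"
  "mat3 a b c d e f g h k $ 3 $ 1 = g" "mat3 a b c d e f g h k $ 3 $ 2 = h"
  "mat3 a b c d e f g h k $ 3 $ 3 = k"
  by (simp_all add: mat3_def)

lemma mat_nth [simp]: "(mat a :: 'a::zero^'n^'n) $ i $ j = (if i = j then a else 0)"
  by (simp add: mat_def)

lemma ones3_nth [simp]: "ones3 $ i = 1"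
  using exhaust_3[of i] by (auto simp: ones3_def)

lemma mat_bar_mult: "mat_bar (A ** B) = mat_bar A ** mat_bar B"
  by (simp add: mat3x3_eq_iff matrix_matrix_mult_3_nth mat_bar_def)

lemma gen_subgroup_least:
  assumes "mat 1 \<in> H" "S \<subseteq> H"
    and "\<And>a b. a \<in> H \<Longrightarrow> b \<in> H \<Longrightarrow> a ** b \<in> H"
    and "\<And>a b. a \<in> H \<Longrightarrow> a ** b = mat 1 \<Longrightarrow> b ** a = mat 1 \<Longrightarrow> b \<in> H"
  shows "gen_subgroup S \<subseteq> H"
proof
  fix a assume "a \<in> gen_subgroup S"
  then show "a \<in> H"
    by (induction rule: gen_subgroup.induct) (use assms in auto)
qed

lemma gen_subgroup_subset_gen_subgroup:
  assumes "S \<subseteq> gen_subgroup T"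
  shows "gen_subgroup S \<subseteq> gen_subgroup T"
proof (rule gen_subgroup_least)
  show "a ** b \<in> gen_subgroup T" if "a \<in> gen_subgroup T" "b \<in> gen_subgroup T" for a b
    using that by (rule gen_subgroup.gen_mult)
  show "b \<in> gen_subgroup T" if "a \<in> gen_subgroup T" "a ** b = mat 1" "b ** a = mat 1" for a b
    using that by (rule gen_subgroup.gen_inv)
qed (use assms gen_subgroup.gen_one in auto)

definition centralizer :: "('a::semiring_1^'n^'n) set \<Rightarrow> ('a^'n^'n) set" where
  "centralizer G = {A. \<forall>X \<in> G. A ** X = X ** A}"

lemma mat_center_eq: "mat_center G = G \<inter> centralizer G"
  by (auto simp: mat_center_def centralizer_def)

lemma commute_inverse:
  fixes A B S :: "'a::semiring_1^'n^'n"
  assumes "A ** B = mat 1" "B ** A = mat 1" "A ** S = S ** A"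
  shows "B ** S = S ** B"
proof -
  have "B ** S = B ** S ** (A ** B)"
    using assms(1) by simp
  also have "\<dots> = B ** (A ** S) ** B"
    using assms(3) by (simp add: matrix_mul_assoc)
  also have "\<dots> = (B ** A) ** S ** B"
    by (simp add: matrix_mul_assoc)
  also have "\<dots> = S ** B"
    using assms(2) by simp
  finally show ?thesis .
qed

lemma gen_subgroup_subset_centralizer:
  assumes "S \<subseteq> centralizer G"
  shows "gen_subgroup S \<subseteq> centralizer G"
proof (rule gen_subgroup_least)
  fix a b assume a: "a \<in> centralizer G" and b: "b \<in> centralizer G"
  have "a ** b ** X = X ** (a ** b)" if "X \<in> G" for X
  proof -
    have "a ** b ** X = a ** (X ** b)"
      using b that by (simp add: centralizer_def flip: matrix_mul_assoc)
    also have "\<dots> = X ** (a ** b)"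
      using a that by (simp add: centralizer_def matrix_mul_assoc)
    finally show ?thesis .
  qed
  then show "a ** b \<in> centralizer G"
    by (simp add: centralizer_def)
next
  fix a b assume "a \<in> centralizer G" "a ** b = mat 1" "b ** a = mat 1"
  then show "b \<in> centralizer G"
    using commute_inverse by (auto simp: centralizer_def)
qed (use assms in \<open>auto simp: centralizer_def\<close>)

lemma mat_bar_one [simp]: "mat_bar (mat 1) = mat 1"
  by (simp add: mat3x3_eq_iff mat_bar_def)

lemma formal_burau_one: "mat 1 \<in> formal_burau"
proof -
  have "invertible (mat 1 :: lmat)"
    unfolding invertible_def by (intro exI[of _ "mat 1"]) simp
  then show ?thesis
    by (simp add: formal_burau_def)
qed

lemma formal_burau_mult:
  assumes "A \<in> formal_burau" "B \<in> formal_burau"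
  shows "A ** B \<in> formal_burau"
proof -
  have "mat_bar (A ** B) ** J3 ** transpose (A ** B)
      = mat_bar A ** (mat_bar B ** J3 ** transpose B) ** transpose A"
    by (simp add: mat_bar_mult matrix_transpose_mul matrix_mul_assoc)
  also have "\<dots> = J3"
    using assms by (simp add: formal_burau_def)
  finally show ?thesis
    using assms by (simp add: formal_burau_def invertible_mult
        flip: vector_matrix_mul_assoc matrix_vector_mul_assoc)
qed

lemma formal_burau_inverse:
  assumes A: "A \<in> formal_burau" and AB: "A ** B = mat 1" "B ** A = mat 1"
  shows "B \<in> formal_burau"
proof -
  have "mat_bar B ** J3 ** transpose B = mat_bar B ** (mat_bar A ** J3 ** transpose A) ** transpose B"
    using A by (simp add: formal_burau_def)
  also have "\<dots> = mat_bar (B ** A) ** J3 ** transpose (B ** A)"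
    by (simp add: mat_bar_mult matrix_transpose_mul matrix_mul_assoc)
  also have "\<dots> = J3"
    using AB by simp
  finally have "mat_bar B ** J3 ** transpose B = J3" .
  moreover have "vrow v* B = vrow"
    using A AB vector_matrix_mul_assoc[of vrow A B] by (simp add: formal_burau_def)
  moreover have "B *v ones3 = ones3"
    using A AB matrix_vector_mul_assoc[of B A ones3] by (simp add: formal_burau_def)
  moreover have "invertible B"
    using AB unfolding invertible_def by blast
  ultimately show ?thesis
    by (simp add: formal_burau_def)
qed

lemma gen_subgroup_subset_formal_burau:
  "S \<subseteq> formal_burau \<Longrightarrow> gen_subgroup S \<subseteq> formal_burau"
  using gen_subgroup_least[OF formal_burau_one _ formal_burau_mult formal_burau_inverse] .

lemma burau_s1_in_formal_burau: "burau_s1 \<in> formal_burau"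
proof -
  let ?B = "mat3 0 1 0 lt_inv (1 - lt_inv) 0 0 0 1"
  have "burau_s1 ** ?B = mat 1" "?B ** burau_s1 = mat 1"
    by (simp_all add: mat3x3_eq_iff matrix_matrix_mult_3_nth burau_s1_def algebra_simps)
  then have "invertible burau_s1"
    unfolding invertible_def by blast
  moreover have "vrow v* burau_s1 = vrow"
    by (simp add: vec3_eq_iff vector_matrix_mult_3_nth vrow_def burau_s1_def
        algebra_simps power2_eq_square power3_eq_cube)
  moreover have "burau_s1 *v ones3 = ones3"
    by (simp add: vec3_eq_iff matrix_vector_mult_3_nth burau_s1_def)
  moreover have "mat_bar burau_s1 ** J3 ** transpose burau_s1 = J3"
    by (simp add: mat3x3_eq_iff matrix_matrix_mult_3_nth burau_s1_def J3_def mat_bar_def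
        transpose_def algebra_simps)
  ultimately show ?thesis
    by (simp add: formal_burau_def)
qed

lemma burau_s2_in_formal_burau: "burau_s2 \<in> formal_burau"
proof -
  let ?B = "mat3 1 0 0 0 0 1 0 lt_inv (1 - lt_inv)"
  have "burau_s2 ** ?B = mat 1" "?B ** burau_s2 = mat 1"
    by (simp_all add: mat3x3_eq_iff matrix_matrix_mult_3_nth burau_s2_def algebra_simps)
  then have "invertible burau_s2"
    unfolding invertible_def by blast
  moreover have "vrow v* burau_s2 = vrow"
    by (simp add: vec3_eq_iff vector_matrix_mult_3_nth vrow_def burau_s2_def
        algebra_simps power2_eq_square power3_eq_cube)
  moreover have "burau_s2 *v ones3 = ones3"
    by (simp add: vec3_eq_iff matrix_vector_mult_3_nth burau_s2_def)
  moreover have "mat_bar burau_s2 ** J3 ** transpose burau_s2 = J3"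
    by (simp add: mat3x3_eq_iff matrix_matrix_mult_3_nth burau_s2_def J3_def mat_bar_def
        transpose_def algebra_simps)
  ultimately show ?thesis
    by (simp add: formal_burau_def)
qed
section \<open>Matrices commuting with the Burau generators\<close>

definition urow :: "laurent ^ 3" where
  "urow = vector [1, lt, lt ^ 2]"

definition central_mat :: "laurent \<Rightarrow> laurent \<Rightarrow> lmat" where
  "central_mat l x = (\<chi> i j. (if i = j then l else 0) + x * urow $ j)"

lemma central_mat_mult:
  "central_mat l x ** central_mat l' x' = central_mat (l * l') (l * x' + x * l' + x * x' * cyclo3)"
  by (simp add: mat3x3_eq_iff matrix_matrix_mult_3_nth central_mat_def urow_def cyclo3_def
      algebra_simps power2_eq_square)

lemma central_mat_eq_one_iff: "central_mat l x = mat 1 \<longleftrightarrow> l = 1 \<and> x = 0"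
  by (auto simp: mat3x3_eq_iff central_mat_def urow_def)

lemma central_mat_mult_ones3: "central_mat l x *v ones3 = (l + x * cyclo3) *s ones3"
  by (simp add: vec3_eq_iff matrix_vector_mult_3_nth central_mat_def urow_def cyclo3_def
      algebra_simps power2_eq_square)

lemma urow_mult_formal_burau:
  assumes "X \<in> formal_burau"
  shows "urow v* X = urow"
proof -
  have "lt *s (urow v* X) = vrow v* X"
    by (simp add: vec3_eq_iff vector_matrix_mult_3_nth vrow_def urow_def
        algebra_simps power2_eq_square power3_eq_cube)
  also have "\<dots> = lt *s urow"
    using assms by (simp add: formal_burau_def vec3_eq_iff vrow_def urow_def
        power2_eq_square power3_eq_cube)
  finally show ?thesis
    by (simp add: vec_eq_iff)
qed

lemma central_mat_commute:
  assumes "X \<in> formal_burau"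
  shows "central_mat l x ** X = X ** central_mat l x"
proof -
  have "(central_mat l x ** X) $ i $ j = l * X$i$j + x * (urow v* X)$j"
       "(X ** central_mat l x) $ i $ j = l * X$i$j + x * (X *v ones3)$i * urow$j" for i j
    using exhaust_3[of i] exhaust_3[of j]
    by (auto simp: matrix_matrix_mult_3_nth vector_matrix_mult_3_nth matrix_vector_mult_3_nth
        central_mat_def algebra_simps)
  moreover have "X *v ones3 = ones3"
    using assms by (simp add: formal_burau_def)
  ultimately show ?thesis
    using urow_mult_formal_burau[OF assms] by (simp add: vec_eq_iff)
qed

lemma commute_burau_generators_imp_central_mat:
  fixes A :: lmat
  assumes "A ** burau_s1 = burau_s1 ** A" and "A ** burau_s2 = burau_s2 ** A"
  shows "A = central_mat (A$1$1 - A$2$1) (A$2$1)"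
proof -
  have s1: "(A ** burau_s1) $ i $ j = (burau_s1 ** A) $ i $ j"
   and s2: "(A ** burau_s2) $ i $ j = (burau_s2 ** A) $ i $ j" for i j
    using assms by simp_all
  note expand = matrix_matrix_mult_3_nth burau_s1_def burau_s2_def
  have entries: "A$3$2 = lt * A$3$1" "A$1$2 = lt * A$2$1" "A$2$3 = A$1$3"
       "A$1$1 = A$2$1 * (1 - lt) + A$2$2" "A$1$3 = lt * A$1$2" "A$3$1 = A$2$1" "A$2$2 = A$3$2 * (1 - lt) + A$3$3"
       "A$2$3 = A$3$2 * lt"
    using s1[of 3 1] s1[of 2 2] s1[of 2 3] s1[of 2 1] s2[of 1 3] s2[of 3 1] s2[of 3 2] s2[of 3 3]
    by (simp_all add: expand algebra_simps)
  show ?thesis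
    unfolding mat3x3_eq_iff
    by (simp add: entries central_mat_def urow_def algebra_simps power2_eq_square)
qed

lemma burau_Delta_eq_central_mat: "burau_Delta = central_mat (lt ^ 3) (1 - lt)"
  by (simp add: burau_Delta_def mat3x3_eq_iff matrix_matrix_mult_3_nth burau_s1_def burau_s2_def
      central_mat_def urow_def algebra_simps power2_eq_square power3_eq_cube)

lemma central_mat_commute_burau_generators:
  "central_mat l x ** burau_s1 = burau_s1 ** central_mat l x"
  "central_mat l x ** burau_s2 = burau_s2 ** central_mat l x"
  using central_mat_commute burau_s1_in_formal_burau burau_s2_in_formal_burau by blast+

lemma central_mat_inverse:
  assumes "central_mat l x ** B = mat 1" "B ** central_mat l x = mat 1"
  obtains l' x' where "B = central_mat l' x'" "l * l' = 1"
proof -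
  have "B = central_mat (B$1$1 - B$2$1) (B$2$1)" (is "B = central_mat ?l' ?x'")
    using commute_burau_generators_imp_central_mat
      commute_inverse[OF assms central_mat_commute_burau_generators(1)]
      commute_inverse[OF assms central_mat_commute_burau_generators(2)] by blast
  moreover from this have "l * ?l' = 1"
    using assms(1) by (metis central_mat_mult central_mat_eq_one_iff)
  ultimately show ?thesis
    using that by blast
qed

lemma central_mat_in_formal_burau:
  assumes "central_mat l x \<in> formal_burau"
  shows "l + x * cyclo3 = 1" and "\<exists>l'. l * l' = 1"
proof -
  have "(l + x * cyclo3) *s ones3 = 1 *s ones3"
    using assms central_mat_mult_ones3[of l x] by (simp add: formal_burau_def)
  then show "l + x * cyclo3 = 1"
    by (simp add: vec_eq_iff)
  obtain B where "central_mat l x ** B = mat 1" "B ** central_mat l x = mat 1"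
    using assms by (auto simp: formal_burau_def invertible_def)
  then show "\<exists>l'. l * l' = 1"
    by (metis central_mat_inverse)
qed
section \<open>The centre\<close>

lemma burau_Delta_in_formal_burau: "burau_Delta \<in> formal_burau"
  unfolding burau_Delta_def
  using burau_s1_in_formal_burau burau_s2_in_formal_burau by (intro formal_burau_mult)

lemma central_mat_power_in:
  assumes "central_mat l x \<in> H" "mat 1 \<in> H" "\<And>a b. a \<in> H \<Longrightarrow> b \<in> H \<Longrightarrow> a ** b \<in> H"
  shows "\<exists>y. central_mat (l ^ n) y \<in> H"
proof (induction n)
  case 0
  show ?case
    by (metis assms(2) central_mat_eq_one_iff power_0)
next
  case (Suc n)
  then obtain y where "central_mat (l ^ n) y \<in> H"
    by blast
  then have "central_mat (l ^ n) y ** central_mat l x \<in> H"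
    using assms by blast
  then show ?case
    by (auto simp: central_mat_mult mult.commute)
qed

lemma Delta_subgroup_contains_central_mat:
  "\<exists>y. central_mat (Poly_Mapping.single (3 * m) 1) y \<in> gen_subgroup {burau_Delta}"
proof -
  let ?G = "gen_subgroup {burau_Delta}"
  have closed: "mat 1 \<in> ?G" "\<And>a b. a \<in> ?G \<Longrightarrow> b \<in> ?G \<Longrightarrow> a ** b \<in> ?G"
    by (simp_all add: gen_subgroup.gen_one gen_subgroup.gen_mult)
  have Delta: "central_mat (Poly_Mapping.single 3 1) (1 - lt) \<in> ?G"
    using burau_Delta_eq_central_mat lt_power[of 3] by (auto intro: gen_subgroup.gen_elem)
  show ?thesis
  proof (cases "m \<ge> 0")
    case True
    then show ?thesis
      using central_mat_power_in[OF Delta closed, of "nat m"] by (simp add: single_one_power mult.commute)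
  next
    case False
    have "burau_Delta \<in> ?G"
      by (rule gen_subgroup.gen_elem) simp
    obtain B where B: "burau_Delta ** B = mat 1" "B ** burau_Delta = mat 1"
      using burau_Delta_in_formal_burau by (auto simp: formal_burau_def invertible_def)
    then have "B \<in> ?G"
      using \<open>burau_Delta \<in> ?G\<close> by (rule gen_subgroup.gen_inv[rotated])
    obtain l' x' where l': "B = central_mat l' x'" "lt ^ 3 * l' = 1"
      using B unfolding burau_Delta_eq_central_mat by (rule central_mat_inverse)
    have "l' = Poly_Mapping.single (- 3) 1 * (lt ^ 3 * l')"
      by (simp add: lt_power mult_single flip: mult.assoc)
    then have "central_mat (Poly_Mapping.single (- 3) 1) x' \<in> ?G"
      using \<open>B \<in> ?G\<close> l' by simp
    from central_mat_power_in[OF this closed, of "nat (- m)"] show ?thesis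
      using False by (simp add: single_one_power mult.commute)
  qed
qed

lemma burau_Delta_in_gen_subgroup: "burau_Delta \<in> gen_subgroup {burau_s1, burau_s2}"
  unfolding burau_Delta_def by (intro gen_subgroup.gen_mult) (auto intro: gen_subgroup.gen_elem)

lemma commute_burau_generators_in_Delta_subgroup:
  assumes A: "A \<in> formal_burau"
    and "A ** burau_s1 = burau_s1 ** A" "A ** burau_s2 = burau_s2 ** A"
  shows "A \<in> gen_subgroup {burau_Delta}"
proof -
  obtain l x where Alx: "A = central_mat l x"
    using commute_burau_generators_imp_central_mat assms(2,3) by blast
  then have lx: "l + x * cyclo3 = 1" and "\<exists>l'. l * l' = 1"
    using A central_mat_in_formal_burau by blast+
  then obtain k c where l: "l = Poly_Mapping.single k c" and c: "c = 1 \<or> c = -1"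
    using laurent_unit_eq_single by blast
  have "cyclo3 * x = 1 - l"
    using lx by (simp add: algebra_simps)
  then obtain m where l: "l = Poly_Mapping.single (3 * m) 1"
    using cyclo3_dvd_one_minus_monomial[of x k c] c l by auto
  obtain y where y: "central_mat l y \<in> gen_subgroup {burau_Delta}"
    using Delta_subgroup_contains_central_mat l by blast
  then have "central_mat l y \<in> formal_burau"
    using gen_subgroup_subset_formal_burau burau_Delta_in_formal_burau by blast
  then have "l + y * cyclo3 = 1"
    by (rule central_mat_in_formal_burau(1))
  then have "x * cyclo3 = y * cyclo3"
    using lx by (metis add_left_cancel)
  then show ?thesis
    using Alx y by simp
qed
lemma mat_center_subset_Delta_subgroup:
  assumes "G \<subseteq> formal_burau" "burau_s1 \<in> G" "burau_s2 \<in> G"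
  shows "mat_center G \<subseteq> gen_subgroup {burau_Delta}"
  using assms commute_burau_generators_in_Delta_subgroup by (auto simp: mat_center_def)

lemma Delta_subgroup_subset_mat_center:
  assumes "gen_subgroup {burau_Delta} \<subseteq> G" "G \<subseteq> formal_burau"
  shows "gen_subgroup {burau_Delta} \<subseteq> mat_center G"
proof -
  have "burau_Delta \<in> centralizer formal_burau"
    unfolding centralizer_def burau_Delta_eq_central_mat by (simp add: central_mat_commute)
  then have "gen_subgroup {burau_Delta} \<subseteq> centralizer formal_burau"
    by (simp add: gen_subgroup_subset_centralizer)
  also have "\<dots> \<subseteq> centralizer G"
    using assms(2) by (auto simp: centralizer_def)
  finally show ?thesis
    using assms(1) by (auto simp: mat_center_eq)
qed

theorem corollary3p13:
  shows "mat_center formal_burau = gen_subgroup {burau_Delta}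
         \<and> mat_center formal_burau = mat_center (gen_subgroup {burau_s1, burau_s2})"
proof -
  let ?B3 = "gen_subgroup {burau_s1, burau_s2}"
  have B3_sub: "?B3 \<subseteq> formal_burau"
    using burau_s1_in_formal_burau burau_s2_in_formal_burau
    by (simp add: gen_subgroup_subset_formal_burau)
  have gens: "burau_s1 \<in> ?B3" "burau_s2 \<in> ?B3"
    by (simp_all add: gen_subgroup.gen_elem)
  have Delta_sub: "gen_subgroup {burau_Delta} \<subseteq> ?B3"
    using burau_Delta_in_gen_subgroup by (simp add: gen_subgroup_subset_gen_subgroup)
  have "mat_center formal_burau = gen_subgroup {burau_Delta}"
    using mat_center_subset_Delta_subgroup[of formal_burau]
      Delta_subgroup_subset_mat_center[of formal_burau] Delta_sub B3_sub
      burau_s1_in_formal_burau burau_s2_in_formal_burau by blast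
  moreover have "mat_center ?B3 = gen_subgroup {burau_Delta}"
    using mat_center_subset_Delta_subgroup[OF B3_sub gens]
      Delta_subgroup_subset_mat_center[OF Delta_sub B3_sub] by blast
  ultimately show ?thesis
    by simp
qed

end
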